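(* Let $P,Q$ be $n\times n$ stochastic matrices. For every $\delta>0$ and every $s\in\{0,1,\dots,n\}$, $$\Phi_{PQ}(s)\le\Phi_P\big(\delta\,\Phi_Q(s)\big)+\frac{n}{\delta}.$$
   Context: A matrix is stochastic if it is entrywise nonnegative with all row sums equal to $1$. For an $n\times n$ stochastic matrix $P$, the maximum one-time influence function is defined by $\Phi_P(0)=0$ and, for $s\in\{1,\dots,n\}$, $\Phi_P(s)=\max_{\mathcal{B}\subseteq\{1,\dots,n\},\,|\mathcal{B}|=s}\sum_{i=1}^n\sum_{j\in\mathcal{B}}P_{ij}$. It is extended to real arguments $x\ge0$ by $\Phi_P(x)=\Phi_P(\min(\lfloor x\rfloor,n))$. *)

theory Defs
  imports "HOL-Analysis.Analysis"
begin

text \<open>n x n matrices are real^'n^'n with n = CARD('n); row i, column j is P$i$j.\<close>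

definition stochastic :: "real^'n^'n \<Rightarrow> bool" where
  "stochastic P \<longleftrightarrow> (\<forall>i j. P$i$j \<ge> 0) \<and> (\<forall>i. (\<Sum>j\<in>UNIV. P$i$j) = 1)"

definition Phi_nat :: "real^'n^'n \<Rightarrow> nat \<Rightarrow> real" where
  "Phi_nat P s = (if s = 0 then 0 else
     Max {(\<Sum>i\<in>UNIV. \<Sum>j\<in>B. P$i$j) | B. B \<subseteq> (UNIV :: 'n set) \<and> card B = s})"

definition Phi :: "real^'n^'n \<Rightarrow> real \<Rightarrow> real" where
  "Phi P x = Phi_nat P (min (nat \<lfloor>x\<rfloor>) CARD('n))"

end

theory Submission
  imports Defs
begin

text \<open>Fix a column set \<open>B\<close> of size \<open>s\<close> and let \<open>c k\<close> be the mass that row \<open>k\<close> of \<open>Q\<close> puts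
  on \<open>B\<close>, so \<open>0 \<le> c k \<le> 1\<close>, \<open>\<Sum>\<^sub>k c k \<le> \<Phi>\<^sub>Q(s)\<close>, and the influence of \<open>B\<close> under \<open>PQ\<close> is
  \<open>\<Sum>\<^sub>i \<Sum>\<^sub>k P i k * c k\<close>. By Markov's inequality at most \<open>\<delta> \<Phi>\<^sub>Q(s)\<close> rows \<open>k\<close> are heavy,
  i.e. have \<open>c k > 1/\<delta>\<close>. Bounding \<open>c k\<close> by \<open>1\<close> on the heavy rows yields at most
  \<open>\<Phi>\<^sub>P(\<delta> \<Phi>\<^sub>Q(s))\<close>; bounding it by \<open>1/\<delta>\<close> elsewhere yields at most \<open>n/\<delta>\<close>, because
  every row of \<open>P\<close> sums to \<open>1\<close>.\<close>

definition influence :: "real^'n^'n \<Rightarrow> 'n set \<Rightarrow> real" where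
  "influence P B = (\<Sum>i\<in>UNIV. \<Sum>j\<in>B. P$i$j)"

definition heavy_rows :: "real^'n^'n \<Rightarrow> 'n set \<Rightarrow> real \<Rightarrow> 'n set" where
  "heavy_rows Q B t = {k. t < (\<Sum>j\<in>B. Q$k$j)}"

lemma stochastic_nonneg: "stochastic P \<Longrightarrow> 0 \<le> P$i$j"
  unfolding stochastic_def by auto

lemma stochastic_row_sum: "stochastic P \<Longrightarrow> (\<Sum>j\<in>UNIV. P$i$j) = 1"
  unfolding stochastic_def by auto

lemma influence_empty [simp]: "influence P {} = 0"
  by (simp add: influence_def)

lemma influence_mono:
  assumes "\<And>i j. 0 \<le> P$i$j" and "B \<subseteq> C"
  shows "influence P B \<le> influence P C"
  unfolding influence_def using assms by (intro sum_mono sum_mono2) auto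

lemma influence_matrix_mult:
  "influence (P ** Q) B = (\<Sum>i\<in>UNIV. \<Sum>k\<in>UNIV. P$i$k * (\<Sum>j\<in>B. Q$k$j))"
  unfolding influence_def matrix_matrix_mult_def
  by (simp add: sum_distrib_left sum.swap[of _ B])

lemma Phi_nat_eq_Max:
  "Phi_nat P s = (if s = 0 then 0 else Max (influence P ` {B. card B = s}))"
  unfolding Phi_nat_def influence_def by (auto intro!: arg_cong[where f = Max])

lemma influence_le_Phi_nat: "card B = s \<Longrightarrow> influence P B \<le> Phi_nat P s"
  by (cases "s = 0") (auto simp: Phi_nat_eq_Max intro!: Max_ge)

lemma Phi_nat_le_bound:
  fixes P :: "real^'n^'n"
  assumes "s \<le> CARD('n)" and "\<And>B. card B = s \<Longrightarrow> influence P B \<le> r"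
  shows "Phi_nat P s \<le> r"
proof -
  obtain B :: "'n set" where B: "card B = s"
    using obtain_subset_with_card_n[OF assms(1)] by auto
  show ?thesis
  proof (cases "s = 0")
    case True
    then show ?thesis using assms(2)[OF B] B by (simp add: Phi_nat_eq_Max)
  next
    case False
    have "influence P ` {B. card B = s} \<noteq> {}" using B by blast
    then show ?thesis using False assms(2) by (auto simp: Phi_nat_eq_Max intro!: Max.boundedI)
  qed
qed

lemma influence_le_Phi_nat_of_card_le:
  fixes P :: "real^'n^'n"
  assumes "\<And>i j. 0 \<le> P$i$j" and "card T \<le> t" and "t \<le> CARD('n)"
  shows "influence P T \<le> Phi_nat P t"
proof -
  have "t - card T \<le> card (UNIV - T)"
    using assms(3) card_Diff_subset[of T UNIV] by simp
  then obtain D where D: "D \<subseteq> UNIV - T" "card D = t - card T"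
    by (rule obtain_subset_with_card_n)
  have "card (T \<union> D) = t"
    using D assms(2) by (subst card_Un_disjoint) auto
  then have "influence P (T \<union> D) \<le> Phi_nat P t"
    by (rule influence_le_Phi_nat)
  moreover have "influence P T \<le> influence P (T \<union> D)"
    using assms(1) by (rule influence_mono) auto
  ultimately show ?thesis by linarith
qed

lemma influence_le_Phi:
  fixes P :: "real^'n^'n"
  assumes "\<And>i j. 0 \<le> P$i$j" and "real (card T) \<le> x"
  shows "influence P T \<le> Phi P x"
proof -
  have "card T \<le> nat \<lfloor>x\<rfloor>"
    using assms(2) by (simp add: le_nat_floor)
  moreover have "card T \<le> CARD('n)"
    by (simp add: card_mono)
  ultimately show ?thesis
    unfolding Phi_def using assms(1) by (intro influence_le_Phi_nat_of_card_le) auto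
qed

lemma card_superlevel_le_sum:
  fixes f :: "'a \<Rightarrow> real"
  assumes "finite A" and "\<And>k. k \<in> A \<Longrightarrow> 0 \<le> f k"
  shows "real (card {k\<in>A. t < f k}) * t \<le> (\<Sum>k\<in>A. f k)"
proof -
  have "real (card {k\<in>A. t < f k}) * t = (\<Sum>k\<in>{k\<in>A. t < f k}. t)"
    by simp
  also have "\<dots> \<le> (\<Sum>k\<in>{k\<in>A. t < f k}. f k)"
    by (intro sum_mono) auto
  also have "\<dots> \<le> (\<Sum>k\<in>A. f k)"
    using assms by (intro sum_mono2) auto
  finally show ?thesis .
qed

lemma sum_mult_le_superlevel_split:
  fixes p c :: "'a \<Rightarrow> real"
  assumes "finite A" and "0 \<le> t"
    and "\<And>k. k \<in> A \<Longrightarrow> 0 \<le> p k" and "\<And>k. k \<in> A \<Longrightarrow> c k \<le> 1"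
  shows "(\<Sum>k\<in>A. p k * c k) \<le> (\<Sum>k\<in>{k\<in>A. t < c k}. p k) + t * (\<Sum>k\<in>A. p k)"
proof -
  let ?S = "{k\<in>A. t < c k}"
  have "(\<Sum>k\<in>A. p k * c k) = (\<Sum>k\<in>?S. p k * c k) + (\<Sum>k\<in>A - ?S. p k * c k)"
    using assms(1) by (simp add: sum.subset_diff[of ?S A])
  also have "(\<Sum>k\<in>?S. p k * c k) \<le> (\<Sum>k\<in>?S. p k)"
    using assms(3,4) by (intro sum_mono) (simp add: mult_left_le)
  also have "(\<Sum>k\<in>A - ?S. p k * c k) \<le> (\<Sum>k\<in>A - ?S. p k * t)"
    using assms(3) by (intro sum_mono) (auto intro: mult_left_mono)
  also have "\<dots> \<le> (\<Sum>k\<in>A. p k * t)"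
    using assms by (intro sum_mono2) auto
  finally show ?thesis by (simp add: sum_distrib_left mult.commute)
qed

lemma card_heavy_rows_le:
  assumes "\<And>i j. 0 \<le> Q$i$j"
  shows "real (card (heavy_rows Q B t)) * t \<le> influence Q B"
  using card_superlevel_le_sum[of UNIV "\<lambda>k. \<Sum>j\<in>B. Q$k$j" t] assms
  unfolding heavy_rows_def influence_def by (simp add: sum_nonneg)

lemma influence_mult_le_heavy_rows:
  fixes P Q :: "real^'n^'n"
  assumes "stochastic P" and "stochastic Q" and "0 \<le> t"
  shows "influence (P ** Q) B \<le> influence P (heavy_rows Q B t) + t * real CARD('n)"
proof -
  have Q_row_mass_le_1: "(\<Sum>j\<in>B. Q$k$j) \<le> 1" for k
  proof -
    have "(\<Sum>j\<in>B. Q$k$j) \<le> (\<Sum>j\<in>UNIV. Q$k$j)"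
      using stochastic_nonneg[OF assms(2)] by (intro sum_mono2) auto
    then show ?thesis using stochastic_row_sum[OF assms(2)] by simp
  qed
  have "(\<Sum>k\<in>UNIV. P$i$k * (\<Sum>j\<in>B. Q$k$j)) \<le> (\<Sum>k\<in>heavy_rows Q B t. P$i$k) + t" for i
    using sum_mult_le_superlevel_split[of UNIV t "\<lambda>k. P$i$k" "\<lambda>k. \<Sum>j\<in>B. Q$k$j"]
      assms(3) stochastic_nonneg[OF assms(1)] stochastic_row_sum[OF assms(1)] Q_row_mass_le_1
    unfolding heavy_rows_def by simp
  then have "influence (P ** Q) B \<le> (\<Sum>i\<in>UNIV. (\<Sum>k\<in>heavy_rows Q B t. P$i$k) + t)"
    unfolding influence_matrix_mult by (intro sum_mono)
  then show ?thesis
    by (simp add: influence_def sum.distrib mult.commute)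
qed

theorem lemma5:
  fixes P Q :: "real^'n^'n" and \<delta> :: real and s :: nat
  assumes "stochastic P" and "stochastic Q" and "\<delta> > 0" and "s \<le> CARD('n)"
  shows "Phi_nat (P ** Q) s \<le> Phi P (\<delta> * Phi_nat Q s) + real CARD('n) / \<delta>"
proof (rule Phi_nat_le_bound[OF assms(4)])
  fix B :: "'n set"
  assume B: "card B = s"
  let ?H = "heavy_rows Q B (1/\<delta>)"
  have "real (card ?H) * (1/\<delta>) \<le> Phi_nat Q s"
    using card_heavy_rows_le[OF stochastic_nonneg[OF assms(2)]] influence_le_Phi_nat[OF B]
    by (rule order_trans)
  then have "influence P ?H \<le> Phi P (\<delta> * Phi_nat Q s)"
    using assms(3) by (intro influence_le_Phi stochastic_nonneg[OF assms(1)]) (simp add: field_simps)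
  moreover have "influence (P ** Q) B \<le> influence P ?H + real CARD('n) / \<delta>"
    using influence_mult_le_heavy_rows[OF assms(1,2), of "1/\<delta>" B] assms(3) by simp
  ultimately show "influence (P ** Q) B \<le> Phi P (\<delta> * Phi_nat Q s) + real CARD('n) / \<delta>"
    by linarith
qed

end
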